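(* If $\mu_0<\mu<1$ and $v\in\mathcal{K}\setminus\mathcal{Y}_\mu$, then $C_v^+\cap\mathcal{K}\subset\mathcal{K}\setminus\mathcal{Y}_\mu$.
   Context: $\mathcal{K}\subset\mathbb{R}^q$ is an open, bounded, convex set with $0\in\mathcal{K}$. Let $g:\mathbb{S}^{q-1}\to(0,\infty)$ be the Lipschitz function such that $\nu\mapsto g(\nu)\nu$ parametrizes $\partial\mathcal{K}$, and $m_2=\sup g$. Define $G:\overline{B_1(0)}\to\overline{\mathcal{K}}$ by $G(x)=g(x/|x|)x$ for $x\ne0$, $G(0)=0$, and for $0<\mu<1$ let $\mathcal{Y}_\mu=G(B_\mu(0))$ (open convex sets increasing to $\mathcal{K}$). Fix $r_0>0$ and $0<\mu_0<1$ with $\overline{B_{r_0}(0)}\subset\mathcal{Y}_{\mu_0}$. Cones: for $v\in\mathcal{K}\setminus\overline{B_{r_0}(0)}$, $C_v^-$ is the closed (solid) half-cone with vertex $v$, axis the ray from $v$ through $0$, and half-aperture $\alpha=\alpha(v)\in(0,\pi/2)$ given by $\sin\alpha=r_0/|v|$; $C_v^+=\{v+\xi:\xi\in\mathbb{R}^q,\ v-\xi\in C_v^-\}$ is its reflection through $v$. (Note that $v\in\mathcal{K}\setminus\mathcal{Y}_\mu$ with $\mu>\mu_0$ implies $v\notin\overline{B_{r_0}(0)}$, so $C_v^+$ is defined.) *)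

theory Defs
  imports "HOL-Analysis.Analysis"
begin

definition radG :: "('a::real_normed_vector \<Rightarrow> real) \<Rightarrow> 'a \<Rightarrow> 'a" where
  "radG g x = (if x = 0 then 0 else g (x /\<^sub>R norm x) *\<^sub>R x)"

definition Ymu :: "('a::real_normed_vector \<Rightarrow> real) \<Rightarrow> real \<Rightarrow> 'a set" where
  "Ymu g \<mu> = radG g ` ball 0 \<mu>"

definition cone_alpha :: "real \<Rightarrow> 'a::real_normed_vector \<Rightarrow> real" where
  "cone_alpha r0 v = arcsin (r0 / norm v)"

text \<open>C_v^-: closed solid half-cone with vertex v, axis the ray from v through 0,
  half-aperture alpha(v): points x with angle between x - v and -v at most alpha.\<close>
definition cone_minus :: "real \<Rightarrow> 'a::real_inner \<Rightarrow> 'a set" where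
  "cone_minus r0 v = {x. norm (x - v) * norm v * cos (cone_alpha r0 v) \<le> (x - v) \<bullet> (- v)}"

definition cone_plus :: "real \<Rightarrow> 'a::real_inner \<Rightarrow> 'a set" where
  "cone_plus r0 v = {v + \<xi> | \<xi>. v - \<xi> \<in> cone_minus r0 v}"

end

theory Submission
  imports Defs
begin

text \<open>Since \<open>\<G>\<close> maps each ray onto the ray through the boundary point \<open>g \<nu> \<nu>\<close> linearly,
  \<open>\<Y>\<^sub>\<mu> = \<mu> \<K>\<close>; in particular \<open>\<Y>\<^sub>\<mu>\<close> is convex and contains \<open>\<Y>\<^sub>\<mu>\<^sub>0 \<supseteq> B\<^sub>r\<^sub>0(0)\<close>.
  If \<open>v + \<xi> \<in> C\<^sub>v\<^sup>+\<close>, the foot \<open>p\<close> of the perpendicular from \<open>0\<close> to the line through \<open>v\<close>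
  in direction \<open>\<xi>\<close> lies behind \<open>v\<close> and satisfies \<open>|p| \<le> r\<^sub>0\<close> by the choice of the aperture.
  So \<open>v\<close> lies on the segment between \<open>p \<in> \<Y>\<^sub>\<mu>\<close> and \<open>v + \<xi>\<close>, and convexity forbids
  \<open>v + \<xi> \<in> \<Y>\<^sub>\<mu>\<close> when \<open>v \<notin> \<Y>\<^sub>\<mu>\<close>.\<close>

lemma scaleR_frontier_in_open_convex_iff:
  fixes K :: "'a::euclidean_space set"
  assumes K: "open K" "convex K" "0 \<in> K"
    and b: "b \<in> frontier K" and t: "0 \<le> t"
  shows "t *\<^sub>R b \<in> K \<longleftrightarrow> t < 1"
proof -
  have bK: "b \<notin> K" using b K by (simp add: frontier_def interior_open)
  have seg: "open_segment 0 c \<subseteq> K" if "c \<in> closure K" for c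
    using in_interior_closure_convex_segment[OF \<open>convex K\<close> _ that] K by (simp add: interior_open)
  have "t *\<^sub>R b \<in> K" if "t < 1"
  proof (cases "t = 0")
    case False
    have "b \<noteq> 0" using bK K by auto
    then have "t *\<^sub>R b \<in> open_segment 0 b"
      using t that False by (auto simp: in_segment)
    then show ?thesis using seg b by (auto simp: frontier_def)
  qed (use K in simp)
  moreover have "t *\<^sub>R b \<notin> K" if "1 \<le> t"
  proof
    assume tb: "t *\<^sub>R b \<in> K"
    have "b \<in> K"
    proof (cases "t = 1")
      case False
      have "b \<noteq> 0" using bK K by auto
      then have "b \<in> open_segment 0 (t *\<^sub>R b)"
        using that False by (auto simp: in_segment intro!: exI[of _ "1 / t"])
      then show ?thesis using seg tb closure_subset by blast
    qed (use tb in simp)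
    then show False using bK by blast
  qed
  ultimately show ?thesis by linarith
qed

lemma radG_scaleR_unit:
  assumes "norm \<nu> = 1" and "t > 0"
  shows "radG g (t *\<^sub>R \<nu>) = t *\<^sub>R (g \<nu> *\<^sub>R \<nu>)"
  using assms by (auto simp: radG_def)

lemma Ymu_eq_scaleR_image:
  fixes K :: "'a::euclidean_space set"
  assumes K: "open K" "convex K" "0 \<in> K"
    and g_pos: "\<forall>\<nu>\<in>sphere 0 1. g \<nu> > 0"
    and frontier_K: "frontier K = (\<lambda>\<nu>. g \<nu> *\<^sub>R \<nu>) ` sphere 0 1"
    and "\<mu> > 0"
  shows "Ymu g \<mu> = (\<lambda>y. \<mu> *\<^sub>R y) ` K"
proof
  show "Ymu g \<mu> \<subseteq> (\<lambda>y. \<mu> *\<^sub>R y) ` K"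
  proof
    fix z assume "z \<in> Ymu g \<mu>"
    then obtain x where x: "norm x < \<mu>" "z = radG g x" by (auto simp: Ymu_def)
    show "z \<in> (\<lambda>y. \<mu> *\<^sub>R y) ` K"
    proof (cases "x = 0")
      case True
      then show ?thesis using x K by (auto simp: radG_def intro!: image_eqI[of _ _ 0])
    next
      case False
      define \<nu> where "\<nu> = x /\<^sub>R norm x"
      have \<nu>: "norm \<nu> = 1" "x = norm x *\<^sub>R \<nu>" using False by (simp_all add: \<nu>_def)
      have "(norm x / \<mu>) *\<^sub>R (g \<nu> *\<^sub>R \<nu>) \<in> K"
        using scaleR_frontier_in_open_convex_iff[OF K, of "g \<nu> *\<^sub>R \<nu>" "norm x / \<mu>"]
          frontier_K \<nu> x \<open>\<mu> > 0\<close> by auto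
      moreover have "z = \<mu> *\<^sub>R ((norm x / \<mu>) *\<^sub>R (g \<nu> *\<^sub>R \<nu>))"
        using radG_scaleR_unit[OF \<nu>(1), of "norm x" g] \<nu>(2) x False \<open>\<mu> > 0\<close> by simp
      ultimately show ?thesis by blast
    qed
  qed
next
  show "(\<lambda>y. \<mu> *\<^sub>R y) ` K \<subseteq> Ymu g \<mu>"
  proof
    fix z assume "z \<in> (\<lambda>y. \<mu> *\<^sub>R y) ` K"
    then obtain y where y: "y \<in> K" "z = \<mu> *\<^sub>R y" by auto
    show "z \<in> Ymu g \<mu>"
    proof (cases "y = 0")
      case True
      then show ?thesis using y by (auto simp: Ymu_def radG_def \<open>\<mu> > 0\<close> intro!: image_eqI[of _ _ 0])
    next
      case False
      define \<nu> where "\<nu> = y /\<^sub>R norm y"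
      have \<nu>: "norm \<nu> = 1" using False by (simp add: \<nu>_def)
      have g\<nu>: "g \<nu> > 0" using g_pos \<nu> by simp
      define t where "t = norm y / g \<nu>"
      have t: "t > 0" using g\<nu> False by (simp add: t_def)
      have y_eq: "y = t *\<^sub>R (g \<nu> *\<^sub>R \<nu>)"
        using g\<nu> False by (simp add: t_def \<nu>_def)
      have "t < 1"
        using scaleR_frontier_in_open_convex_iff[OF K, of "g \<nu> *\<^sub>R \<nu>" t]
          frontier_K \<nu> t y y_eq by auto
      then have "norm ((\<mu> * t) *\<^sub>R \<nu>) < \<mu>" using \<nu> t \<open>\<mu> > 0\<close> by simp
      moreover have "radG g ((\<mu> * t) *\<^sub>R \<nu>) = z"
        using radG_scaleR_unit[OF \<nu>, of "\<mu> * t" g] y y_eq t \<open>\<mu> > 0\<close> by simp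
      ultimately show ?thesis unfolding Ymu_def by force
    qed
  qed
qed

lemma cos_cone_alpha:
  assumes "0 \<le> r0" and "r0 \<le> norm v"
  shows "cos (cone_alpha r0 v) \<ge> 0"
    and "(norm v * cos (cone_alpha r0 v))\<^sup>2 = (norm v)\<^sup>2 - r0\<^sup>2"
proof -
  have r: "0 \<le> r0 / norm v" "r0 / norm v \<le> 1"
    using assms by (auto simp: divide_le_eq)
  then have "(r0 / norm v)\<^sup>2 \<le> 1" by (simp add: power_le_one)
  moreover have cos_eq: "cos (cone_alpha r0 v) = sqrt (1 - (r0 / norm v)\<^sup>2)"
    unfolding cone_alpha_def using r by (simp add: cos_arcsin)
  ultimately show "cos (cone_alpha r0 v) \<ge> 0"
    and "(norm v * cos (cone_alpha r0 v))\<^sup>2 = (norm v)\<^sup>2 - r0\<^sup>2"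
    using assms by (auto simp: power_mult_distrib power_divide right_diff_distrib)
qed

lemma cone_minus_projection:
  fixes v \<xi> :: "'a::real_inner"
  assumes r0: "0 \<le> r0" "r0 \<le> norm v"
    and cone: "v - \<xi> \<in> cone_minus r0 v" and "\<xi> \<noteq> 0"
  shows "0 \<le> \<xi> \<bullet> v"
    and "norm (v - ((\<xi> \<bullet> v) / (norm \<xi>)\<^sup>2) *\<^sub>R \<xi>) \<le> r0"
proof -
  define c where "c = cos (cone_alpha r0 v)"
  have aperture: "norm \<xi> * (norm v * c) \<le> \<xi> \<bullet> v"
    using cone by (simp add: cone_minus_def c_def mult.assoc)
  have c: "c \<ge> 0" "(norm v * c)\<^sup>2 = (norm v)\<^sup>2 - r0\<^sup>2"
    using cos_cone_alpha[OF r0] by (simp_all add: c_def)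
  show inner_nonneg: "0 \<le> \<xi> \<bullet> v"
    using aperture c(1) by (meson mult_nonneg_nonneg norm_ge_zero order_trans)
  have \<xi>2: "(norm \<xi>)\<^sup>2 > 0" using \<open>\<xi> \<noteq> 0\<close> by simp
  have "(norm \<xi> * (norm v * c))\<^sup>2 \<le> (\<xi> \<bullet> v)\<^sup>2"
    using aperture c(1) by (intro power_mono) auto
  then have "(norm \<xi>)\<^sup>2 * ((norm v)\<^sup>2 - r0\<^sup>2) \<le> (\<xi> \<bullet> v)\<^sup>2"
    by (simp only: power_mult_distrib[of "norm \<xi>"] c(2))
  then have bound: "(norm v)\<^sup>2 - r0\<^sup>2 \<le> (\<xi> \<bullet> v)\<^sup>2 / (norm \<xi>)\<^sup>2"
    using \<xi>2 by (simp add: pos_le_divide_eq mult.commute)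
  define s where "s = (\<xi> \<bullet> v) / (norm \<xi>)\<^sup>2"
  \<comment> \<open>Pythagoras for the orthogonal projection of \<open>v\<close> onto the line \<open>\<real> \<xi>\<close>.\<close>
  have "(norm (v - s *\<^sub>R \<xi>))\<^sup>2 = (norm v)\<^sup>2 - 2 * s * (\<xi> \<bullet> v) + s\<^sup>2 * (norm \<xi>)\<^sup>2"
    unfolding power2_norm_eq_inner
    by (simp add: inner_diff_left inner_diff_right inner_commute power2_eq_square algebra_simps)
  also have "\<dots> = (norm v)\<^sup>2 - (\<xi> \<bullet> v)\<^sup>2 / (norm \<xi>)\<^sup>2"
    using \<xi>2 by (simp add: s_def power2_eq_square field_simps)
  finally have "(norm (v - s *\<^sub>R \<xi>))\<^sup>2 \<le> r0\<^sup>2" using bound by linarith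
  then show "norm (v - ((\<xi> \<bullet> v) / (norm \<xi>)\<^sup>2) *\<^sub>R \<xi>) \<le> r0"
    unfolding s_def using r0 power2_le_imp_le by blast
qed

lemma cone_plus_disjoint_convex:
  fixes C :: "'a::real_inner set"
  assumes "convex C" and "0 \<le> r0" and "cball 0 r0 \<subseteq> C" and "v \<notin> C"
  shows "cone_plus r0 v \<inter> C = {}"
proof (rule ccontr)
  assume "cone_plus r0 v \<inter> C \<noteq> {}"
  then obtain \<xi> where x: "v + \<xi> \<in> C" and cone: "v - \<xi> \<in> cone_minus r0 v"
    by (auto simp: cone_plus_def)
  have "r0 \<le> norm v" using assms by (meson mem_cball_0 not_le order_less_imp_le subsetD)
  have "\<xi> \<noteq> 0" using x \<open>v \<notin> C\<close> by auto
  define s where "s = (\<xi> \<bullet> v) / (norm \<xi>)\<^sup>2"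
  have s: "0 \<le> s" and p: "v - s *\<^sub>R \<xi> \<in> C"
    using cone_minus_projection[OF \<open>0 \<le> r0\<close> \<open>r0 \<le> norm v\<close> cone \<open>\<xi> \<noteq> 0\<close>] assms
    by (auto simp: s_def)
  have "(s / (1 + s)) *\<^sub>R (v + \<xi>) + (1 / (1 + s)) *\<^sub>R (v - s *\<^sub>R \<xi>) \<in> C"
    using convexD[OF \<open>convex C\<close> x p] s by (simp add: add_divide_distrib[symmetric])
  moreover have "(s / (1 + s)) *\<^sub>R (v + \<xi>) + (1 / (1 + s)) *\<^sub>R (v - s *\<^sub>R \<xi>) = v"
  proof -
    have "1 / (1 + s) + s / (1 + s) = 1" using s by (simp add: add_divide_distrib[symmetric])
    then show ?thesis by (simp add: algebra_simps flip: scaleR_add_left)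
  qed
  ultimately show False using \<open>v \<notin> C\<close> by simp
qed

theorem proposition2p3:
  fixes K :: "'a::euclidean_space set" and g :: "'a \<Rightarrow> real"
    and r0 \<mu>0 \<mu> :: real and v :: 'a
  assumes "open K" and "bounded K" and "convex K" and "0 \<in> K"
    and "\<exists>L. L-lipschitz_on (sphere 0 1) g"
    and "\<forall>\<nu>\<in>sphere 0 1. g \<nu> > 0"
    and "frontier K = (\<lambda>\<nu>. g \<nu> *\<^sub>R \<nu>) ` sphere 0 1"
    and "r0 > 0" and "0 < \<mu>0" and "\<mu>0 < 1"
    and "cball 0 r0 \<subseteq> Ymu g \<mu>0"
    and "\<mu>0 < \<mu>" and "\<mu> < 1"
    and "v \<in> K - Ymu g \<mu>"
  shows "cone_plus r0 v \<inter> K \<subseteq> K - Ymu g \<mu>"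
proof -
  have "convex (Ymu g \<mu>)"
    using Ymu_eq_scaleR_image[of K g \<mu>] assms convex_scaling by fastforce
  moreover have "cball 0 r0 \<subseteq> Ymu g \<mu>"
    using assms unfolding Ymu_def by (meson image_mono subset_ball order.strict_implies_order order_trans)
  ultimately have "cone_plus r0 v \<inter> Ymu g \<mu> = {}"
    using cone_plus_disjoint_convex assms by (meson DiffD2 order.strict_implies_order)
  then show ?thesis by blast
qed

end
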